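(* If $G$ is a connected locally Dirac graph of order $n \ge 9$, then $\operatorname{diam}(G) \le \lfloor n/3 \rfloor - 1$. Moreover, this bound is sharp: for every integer $m \ge 3$, the graph $P_m \boxtimes K_3$ is a connected locally Dirac graph of order $n=3m$ with diameter $n/3 - 1 = m-1$.
   Context: A graph $G$ is locally Dirac if for every vertex $v \in V(G)$ and every $u \in N(v)$, $\deg_{\langle N(v)\rangle}(u) \ge \deg_G(v)/2$, where $N(v)$ is the open neighbourhood of $v$ and $\langle N(v)\rangle$ the subgraph induced by it. $P_m$ is the path on $m$ vertices, $K_3$ the triangle, and $G\boxtimes H$ the strong product: vertex set $V(G)\times V(H)$, with $(u,v)\sim(x,y)$ iff ($u=x$ and $vy\in E(H)$) or ($v=y$ and $ux\in E(G)$) or ($ux\in E(G)$ and $vy\in E(H)$). *)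

theory Defs
  imports Complex_Main
begin

definition simple_graph :: "'a set \<Rightarrow> ('a \<Rightarrow> 'a \<Rightarrow> bool) \<Rightarrow> bool" where
  "simple_graph V E \<longleftrightarrow> finite V \<and>
     (\<forall>u v. E u v \<longrightarrow> u \<in> V \<and> v \<in> V) \<and>
     (\<forall>u v. E u v \<longrightarrow> E v u) \<and> (\<forall>u. \<not> E u u)"

definition nbhd :: "'a set \<Rightarrow> ('a \<Rightarrow> 'a \<Rightarrow> bool) \<Rightarrow> 'a \<Rightarrow> 'a set" where
  "nbhd V E v = {u \<in> V. E v u}"

definition deg :: "'a set \<Rightarrow> ('a \<Rightarrow> 'a \<Rightarrow> bool) \<Rightarrow> 'a \<Rightarrow> nat" where
  "deg V E v = card (nbhd V E v)"

definition induced_rel :: "'a set \<Rightarrow> ('a \<Rightarrow> 'a \<Rightarrow> bool) \<Rightarrow> 'a \<Rightarrow> 'a \<Rightarrow> bool" where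
  "induced_rel S E u v \<longleftrightarrow> u \<in> S \<and> v \<in> S \<and> E u v"

definition locally_dirac :: "'a set \<Rightarrow> ('a \<Rightarrow> 'a \<Rightarrow> bool) \<Rightarrow> bool" where
  "locally_dirac V E \<longleftrightarrow>
     (\<forall>v\<in>V. \<forall>u\<in>nbhd V E v.
        real (deg (nbhd V E v) (induced_rel (nbhd V E v) E) u) \<ge> real (deg V E v) / 2)"

definition walk :: "'a set \<Rightarrow> ('a \<Rightarrow> 'a \<Rightarrow> bool) \<Rightarrow> 'a list \<Rightarrow> bool" where
  "walk V E xs \<longleftrightarrow> xs \<noteq> [] \<and> set xs \<subseteq> V \<and>
     (\<forall>i. Suc i < length xs \<longrightarrow> E (xs ! i) (xs ! Suc i))"

definition connected_graph :: "'a set \<Rightarrow> ('a \<Rightarrow> 'a \<Rightarrow> bool) \<Rightarrow> bool" where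
  "connected_graph V E \<longleftrightarrow> V \<noteq> {} \<and>
     (\<forall>u\<in>V. \<forall>v\<in>V. \<exists>xs. walk V E xs \<and> hd xs = u \<and> last xs = v)"

definition gdist :: "'a set \<Rightarrow> ('a \<Rightarrow> 'a \<Rightarrow> bool) \<Rightarrow> 'a \<Rightarrow> 'a \<Rightarrow> nat" where
  "gdist V E u v = (LEAST k. \<exists>xs. walk V E xs \<and> hd xs = u \<and> last xs = v \<and> length xs = Suc k)"

definition diam :: "'a set \<Rightarrow> ('a \<Rightarrow> 'a \<Rightarrow> bool) \<Rightarrow> nat" where
  "diam V E = Max {gdist V E u v | u v. u \<in> V \<and> v \<in> V}"

definition path_V :: "nat \<Rightarrow> nat set" where "path_V m = {0..<m}"
definition path_E :: "nat \<Rightarrow> nat \<Rightarrow> nat \<Rightarrow> bool" where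
  "path_E m i j \<longleftrightarrow> i < m \<and> j < m \<and> (Suc i = j \<or> Suc j = i)"

definition K3_V :: "nat set" where "K3_V = {0, 1, 2}"
definition K3_E :: "nat \<Rightarrow> nat \<Rightarrow> bool" where
  "K3_E i j \<longleftrightarrow> i \<in> K3_V \<and> j \<in> K3_V \<and> i \<noteq> j"

definition strong_V :: "'a set \<Rightarrow> 'b set \<Rightarrow> ('a \<times> 'b) set" where
  "strong_V V1 V2 = V1 \<times> V2"
definition strong_E :: "'a set \<Rightarrow> ('a \<Rightarrow> 'a \<Rightarrow> bool) \<Rightarrow> 'b set \<Rightarrow> ('b \<Rightarrow> 'b \<Rightarrow> bool)
    \<Rightarrow> 'a \<times> 'b \<Rightarrow> 'a \<times> 'b \<Rightarrow> bool" where
  "strong_E V1 E1 V2 E2 p q \<longleftrightarrow> p \<in> V1 \<times> V2 \<and> q \<in> V1 \<times> V2 \<and>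
     ((fst p = fst q \<and> E2 (snd p) (snd q)) \<or> (snd p = snd q \<and> E1 (fst p) (fst q))
      \<or> (E1 (fst p) (fst q) \<and> E2 (snd p) (snd q)))"

end

theory Submission
  imports Defs
begin

text \<open>
  Fix a vertex v and let L(i) be the set of vertices at distance i from v. If x \<in> L(i+2),
  w \<in> L(i+1), p \<in> L(i) and p \<sim> w \<sim> x, then p and x are non-adjacent neighbours of w,
  each adjacent to at least half of N(w), so they have two common neighbours; these lie in
  L(i+1). Hence every layer strictly between v and a vertex at maximal distance has at least
  three vertices. Double counting the edges between N(v) and L(2) shows that a vertex of
  degree at most 4 has at most two vertices at distance 2 and none further away, forcing
  n \<le> 7; so for n \<ge> 9 all degrees are at least 5. With v at one end of a diametral pair,
  the first two and the last two layers then contain at least six vertices each, whence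
  n \<ge> 3 (diam + 1).
\<close>

section \<open>Walks and distances\<close>

definition reach :: "'a set \<Rightarrow> ('a \<Rightarrow> 'a \<Rightarrow> bool) \<Rightarrow> nat \<Rightarrow> 'a \<Rightarrow> 'a \<Rightarrow> bool" where
  "reach V E k u v \<longleftrightarrow> (\<exists>xs. walk V E xs \<and> hd xs = u \<and> last xs = v \<and> length xs = Suc k)"

lemma gdist_eq_Least: "gdist V E u v = (LEAST k. reach V E k u v)"
  by (simp add: gdist_def reach_def)

lemma reach_gdist: "reach V E k u v \<Longrightarrow> reach V E (gdist V E u v) u v"
  unfolding gdist_eq_Least by (rule LeastI)

lemma gdist_le: "reach V E k u v \<Longrightarrow> gdist V E u v \<le> k"
  unfolding gdist_eq_Least by (rule Least_le)

lemma reach_0_iff: "reach V E 0 u v \<longleftrightarrow> u \<in> V \<and> u = v"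
  unfolding reach_def walk_def by (auto simp: length_Suc_conv intro!: exI[of _ "[v]"])

lemma reach_snoc:
  assumes "reach V E k u y" "E y x" "x \<in> V"
  shows "reach V E (Suc k) u x"
proof -
  obtain xs where xs: "walk V E xs" "hd xs = u" "last xs = y" "length xs = Suc k"
    using assms(1) unfolding reach_def by blast
  have "xs ! k = y" using xs(3,4) by (metis last_conv_nth diff_Suc_1 list.size(3) nat.distinct(1))
  then have "walk V E (xs @ [x])"
    using xs(1,4) assms(2,3) unfolding walk_def by (auto simp: nth_append less_Suc_eq)
  moreover have "hd (xs @ [x]) = u" using xs by (cases xs) auto
  ultimately show ?thesis unfolding reach_def using xs(4) by (intro exI[of _ "xs @ [x]"]) auto
qed

lemma reach_SucD:
  assumes "reach V E (Suc k) u x"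
  obtains y where "reach V E k u y" "E y x"
proof -
  obtain xs where xs: "walk V E xs" "hd xs = u" "last xs = x" "length xs = Suc (Suc k)"
    using assms unfolding reach_def by blast
  have "walk V E (take (Suc k) xs)" using xs(1,4) unfolding walk_def by (auto dest: in_set_takeD)
  moreover have "hd (take (Suc k) xs) = u" using xs by (cases xs) auto
  moreover have "last (take (Suc k) xs) = xs ! k" using xs(4) by (subst last_conv_nth) auto
  moreover have "E (xs ! k) x" using xs(1,3,4) unfolding walk_def by (simp add: last_conv_nth) (metis lessI)
  ultimately show ?thesis using xs(4) that unfolding reach_def by fastforce
qed

lemma reach_chain:
  assumes "\<And>t. t \<le> k \<Longrightarrow> f t \<in> V" "\<And>t. t < k \<Longrightarrow> E (f t) (f (Suc t))"
  shows "reach V E k (f 0) (f k)"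
  using assms by (induction k) (auto simp: reach_0_iff intro: reach_snoc)

lemma reach_bounded_growth:
  assumes "\<And>x y. E x y \<Longrightarrow> h y \<le> Suc (h x)" "reach V E k u v"
  shows "h v \<le> h u + k"
  using assms(2)
proof (induction k arbitrary: v)
  case 0 then show ?case by (simp add: reach_0_iff)
next
  case (Suc k)
  then obtain y where "reach V E k u y" "E y v" by (auto elim: reach_SucD)
  with Suc.IH assms(1)[of y v] show ?case by fastforce
qed

lemma deg_induced_nbhd:
  assumes "u \<in> nbhd V E v"
  shows "deg (nbhd V E v) (induced_rel (nbhd V E v) E) u = card (nbhd V E v \<inter> nbhd V E u)"
proof -
  have "nbhd (nbhd V E v) (induced_rel (nbhd V E v) E) u = nbhd V E v \<inter> nbhd V E u"
    using assms unfolding nbhd_def induced_rel_def by auto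
  then show ?thesis unfolding deg_def by simp
qed

lemma double_counting_le:
  assumes "finite A" "finite B"
    and "\<And>a. a \<in> A \<Longrightarrow> p \<le> card {b \<in> B. R a b}"
    and "\<And>b. b \<in> B \<Longrightarrow> card {a \<in> A. R a b} \<le> q"
  shows "p * card A \<le> q * card B"
proof -
  have "p * card A \<le> (\<Sum>a\<in>A. card {b \<in> B. R a b})"
    using sum_bounded_below[of A p] assms(3) by (simp add: mult.commute)
  also have "\<dots> = (\<Sum>b\<in>B. card {a \<in> A. R a b})"
    using assms(1,2) by (rule sum_multicount_gen) simp
  also have "\<dots> \<le> q * card B"
    using sum_bounded_above[of B _ q] assms(4) by (simp add: mult.commute)
  finally show ?thesis .
qed

lemma sum_ge_three_per_index:
  fixes f :: "nat \<Rightarrow> nat"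
  assumes "3 \<le> D" "6 \<le> f 0 + f 1" "6 \<le> f (D - 1) + f D"
    and "\<And>i. 2 \<le> i \<Longrightarrow> i \<le> D - 2 \<Longrightarrow> 3 \<le> f i"
  shows "3 * (D + 1) \<le> (\<Sum>i\<le>D. f i)"
proof -
  have "{..D} = {0, 1, D - 1, D} \<union> {2..D - 2}" "{0, 1, D - 1, D} \<inter> {2..D - 2} = {}"
    using assms(1) by auto
  then have "(\<Sum>i\<le>D. f i) = (\<Sum>i\<in>{0, 1, D - 1, D}. f i) + (\<Sum>i = 2..D - 2. f i)"
    by (metis finite_atLeastAtMost finite.emptyI finite.insertI sum.union_disjoint)
  moreover have "(\<Sum>i\<in>{0, 1, D - 1, D}. f i) = f 0 + f 1 + (f (D - 1) + f D)"
    using assms(1) by simp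
  moreover have "3 * (D - 3) \<le> (\<Sum>i = 2..D - 2. f i)"
    using sum_bounded_below[of "{2..D - 2}" 3 f] assms(4) by simp
  ultimately show ?thesis
    using assms(1,2,3) by arith
qed

lemma diam_eq_Max_image: "diam V E = Max ((\<lambda>(u, w). gdist V E u w) ` (V \<times> V))"
proof -
  have "{gdist V E u w | u w. u \<in> V \<and> w \<in> V} = (\<lambda>(u, w). gdist V E u w) ` (V \<times> V)"
    by auto
  then show ?thesis unfolding diam_def by simp
qed

locale sgraph =
  fixes V :: "'a set" and E :: "'a \<Rightarrow> 'a \<Rightarrow> bool"
  assumes simple: "simple_graph V E"
begin

abbreviation N :: "'a \<Rightarrow> 'a set" where "N \<equiv> nbhd V E"

lemma finite_V: "finite V"
  using simple unfolding simple_graph_def by blast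

lemma edge_in_V: "E u v \<Longrightarrow> u \<in> V \<and> v \<in> V"
  using simple unfolding simple_graph_def by blast

lemma edge_sym: "E u v \<Longrightarrow> E v u"
  using simple unfolding simple_graph_def by blast

lemma edge_irrefl: "\<not> E u u"
  using simple unfolding simple_graph_def by blast

lemma in_nbhd_iff: "x \<in> N v \<longleftrightarrow> E v x"
  unfolding nbhd_def using edge_in_V by auto

lemma nbhd_subset: "N v \<subseteq> V"
  unfolding nbhd_def by auto

lemma finite_nbhd: "finite (N v)"
  using finite_subset[OF nbhd_subset finite_V] .

lemma card_nbhd_Int_less:
  assumes "a \<in> N v"
  shows "card (N a \<inter> N v) < deg V E v"
proof -
  have "a \<notin> N a" using edge_irrefl in_nbhd_iff by blast
  then have "N a \<inter> N v \<subset> N v" using assms by blast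
  then show ?thesis unfolding deg_def by (rule psubset_card_mono[OF finite_nbhd])
qed

end

locale connected_sgraph = sgraph +
  assumes connected: "connected_graph V E"
begin

lemma reach_ex: "u \<in> V \<Longrightarrow> v \<in> V \<Longrightarrow> \<exists>k. reach V E k u v"
  using connected unfolding connected_graph_def reach_def walk_def
  by (metis Suc_pred' length_greater_0_conv)

lemma reach_gdist_V: "u \<in> V \<Longrightarrow> v \<in> V \<Longrightarrow> reach V E (gdist V E u v) u v"
  using reach_ex reach_gdist by metis

lemma gdist_self: "u \<in> V \<Longrightarrow> gdist V E u u = 0"
  using gdist_le[of V E 0 u u] by (simp add: reach_0_iff)

lemma gdist_eq_0_iff: "u \<in> V \<Longrightarrow> v \<in> V \<Longrightarrow> gdist V E u v = 0 \<longleftrightarrow> u = v"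
  using reach_gdist_V[of u v] gdist_self by (auto simp: reach_0_iff)

lemma gdist_edge: "v \<in> V \<Longrightarrow> E a x \<Longrightarrow> gdist V E v x \<le> Suc (gdist V E v a)"
  using gdist_le[OF reach_snoc[OF reach_gdist_V]] edge_in_V by metis

lemma gdist_SucE:
  assumes "v \<in> V" "x \<in> V" "gdist V E v x = Suc k"
  obtains y where "y \<in> V" "E y x" "gdist V E v y = k"
proof -
  obtain y where y: "reach V E k v y" "E y x"
    using reach_gdist_V[OF assms(1,2)] assms(3) by (auto elim: reach_SucD)
  have "gdist V E v y = k"
    using gdist_le[OF y(1)] gdist_edge[OF assms(1) y(2)] assms(3) by simp
  then show ?thesis using that y(2) edge_in_V by blast
qed

lemma gdist_intermediate:
  assumes "v \<in> V" "x \<in> V" "j \<le> gdist V E v x"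
  shows "\<exists>y\<in>V. gdist V E v y = j"
  using assms(2,3)
proof (induction "gdist V E v x" arbitrary: x)
  case 0
  then show ?case by auto
next
  case (Suc k)
  show ?case
  proof (cases "j = Suc k")
    case True
    then show ?thesis using Suc.hyps(2) Suc.prems(1) by auto
  next
    case False
    obtain y where "y \<in> V" "gdist V E v y = k"
      using gdist_SucE[OF assms(1) Suc.prems(1) Suc.hyps(2)[symmetric]] by blast
    with Suc.hyps(1) Suc.hyps(2) Suc.prems(2) False show ?thesis by force
  qed
qed

definition layer :: "'a \<Rightarrow> nat \<Rightarrow> 'a set" where
  "layer v i = {y \<in> V. gdist V E v y = i}"

lemma finite_layer: "finite (layer v i)"
  unfolding layer_def using finite_V by simp

lemma layer_0: "v \<in> V \<Longrightarrow> layer v 0 = {v}"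
  unfolding layer_def using gdist_eq_0_iff by auto

lemma layer_1:
  assumes "v \<in> V"
  shows "layer v 1 = N v"
proof (intro equalityI subsetI)
  fix x assume "x \<in> layer v 1"
  then obtain y where "E y x" "gdist V E v y = 0" "y \<in> V" "x \<in> V"
    using gdist_SucE[OF assms, of x 0] unfolding layer_def by auto
  then show "x \<in> N v" using gdist_eq_0_iff[OF assms] in_nbhd_iff by blast
next
  fix x assume "x \<in> N v"
  then have "E v x" "x \<in> V" using in_nbhd_iff nbhd_subset by auto
  moreover have "x \<noteq> v" using \<open>E v x\<close> edge_irrefl by blast
  ultimately show "x \<in> layer v 1"
    using gdist_edge[OF assms \<open>E v x\<close>] gdist_self[OF assms] gdist_eq_0_iff[OF assms]
    unfolding layer_def by fastforce
qed

lemma diam_attained: "\<exists>u\<in>V. \<exists>w\<in>V. gdist V E u w = diam V E"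
proof -
  have "V \<noteq> {}" using connected unfolding connected_graph_def by blast
  then have "diam V E \<in> (\<lambda>(u, w). gdist V E u w) ` (V \<times> V)"
    unfolding diam_eq_Max_image using finite_V by (intro Max_in) auto
  then show ?thesis by force
qed

lemma gdist_le_diam: "u \<in> V \<Longrightarrow> w \<in> V \<Longrightarrow> gdist V E u w \<le> diam V E"
  unfolding diam_eq_Max_image using finite_V by (auto intro!: Max_ge)

lemma closed_nbhd_of_farthest_subset:
  assumes v: "v \<in> V" and w: "w \<in> V" "gdist V E v w = diam V E"
  shows "insert w (N w) \<subseteq> layer v (diam V E - 1) \<union> layer v (diam V E)"
proof
  fix y assume "y \<in> insert w (N w)"
  then consider "y = w" | "E y w" "y \<in> V" using in_nbhd_iff edge_sym nbhd_subset by blast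
  then show "y \<in> layer v (diam V E - 1) \<union> layer v (diam V E)"
  proof cases
    case 2
    then show ?thesis
      using gdist_edge[OF v \<open>E y w\<close>] gdist_le_diam[OF v \<open>y \<in> V\<close>] w(2)
      unfolding layer_def by auto
  qed (use w in \<open>auto simp: layer_def\<close>)
qed

end

section \<open>Locally Dirac graphs\<close>

locale ldirac_sgraph = sgraph +
  assumes dirac: "locally_dirac V E"
begin

lemma deg_le_twice_common_nbhd:
  assumes "E v u"
  shows "deg V E v \<le> 2 * card (N v \<inter> N u)"
proof -
  have "v \<in> V" "u \<in> N v" using assms edge_in_V in_nbhd_iff by auto
  then have "real (deg V E v) / 2 \<le> real (card (N v \<inter> N u))"
    using dirac deg_induced_nbhd[of u V E v] unfolding locally_dirac_def by fastforce
  then show ?thesis by linarith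
qed

lemma card_common_nbhd_ge_2:
  assumes "E w p" "E w x" "p \<noteq> x" "\<not> E p x"
  shows "2 \<le> card (N w \<inter> N p \<inter> N x)"
proof -
  let ?A = "N w \<inter> N p" and ?B = "N w \<inter> N x"
  have px: "{p, x} \<subseteq> N w" using assms(1,2) in_nbhd_iff by blast
  have "p \<notin> N p" "x \<notin> N x" "p \<notin> N x" "x \<notin> N p"
    using assms(4) edge_irrefl edge_sym in_nbhd_iff by blast+
  then have "(?A \<union> ?B) \<union> {p, x} \<subseteq> N w" "(?A \<union> ?B) \<inter> {p, x} = {}"
    using px by blast+
  then have "card (?A \<union> ?B) + card {p, x} \<le> deg V E w"
    unfolding deg_def using finite_nbhd card_mono card_Un_disjoint
    by (metis finite_Un finite_subset)
  moreover have "card {p, x} = 2" using assms(3) by simp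
  moreover have "card ?A + card ?B = card (?A \<union> ?B) + card (N w \<inter> N p \<inter> N x)"
    using card_Un_Int[of ?A ?B] finite_nbhd by (simp add: Int_ac)
  moreover have "deg V E w \<le> 2 * card ?A" "deg V E w \<le> 2 * card ?B"
    using assms(1,2) deg_le_twice_common_nbhd by blast+
  ultimately show ?thesis by linarith
qed

end

locale connected_ldirac_sgraph = connected_sgraph + ldirac_sgraph
begin

lemma card_nbhd_prev_layer_ge_3:
  assumes v: "v \<in> V" and x: "x \<in> V" "gdist V E v x = Suc (Suc i)"
  shows "3 \<le> card (N x \<inter> layer v (Suc i))"
proof -
  obtain w where w: "w \<in> V" "E w x" "gdist V E v w = Suc i"
    using gdist_SucE[OF v x] by blast
  obtain p where p: "E p w" "gdist V E v p = i"
    using gdist_SucE[OF v w(1,3)] by blast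
  have "\<not> E p x" "p \<noteq> x" using gdist_edge[OF v, of p x] p(2) x(2) by auto
  then have "2 \<le> card (N w \<inter> N p \<inter> N x)"
    using card_common_nbhd_ge_2 edge_sym[OF p(1)] w(2) by blast
  moreover have "w \<notin> N w" using edge_irrefl in_nbhd_iff by auto
  moreover have "N w \<inter> N p \<inter> N x \<subseteq> layer v (Suc i)"
  proof
    fix y assume "y \<in> N w \<inter> N p \<inter> N x"
    then have "E p y" "E y x" "y \<in> V" using in_nbhd_iff edge_sym edge_in_V by blast+
    then show "y \<in> layer v (Suc i)"
      using gdist_edge[OF v \<open>E p y\<close>] gdist_edge[OF v \<open>E y x\<close>] p(2) x(2)
      unfolding layer_def by simp
  qed
  then have "insert w (N w \<inter> N p \<inter> N x) \<subseteq> N x \<inter> layer v (Suc i)"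
    using w edge_sym[OF w(2)] in_nbhd_iff unfolding layer_def by blast
  ultimately show ?thesis
    using card_mono[of "N x \<inter> layer v (Suc i)" "insert w (N w \<inter> N p \<inter> N x)"]
      finite_nbhd finite_layer by (simp add: card_insert_if)
qed

lemma card_layer_ge_3:
  assumes "v \<in> V" "x \<in> V" "0 < i" "i < gdist V E v x"
  shows "3 \<le> card (layer v i)"
proof -
  obtain y where y: "y \<in> V" "gdist V E v y = Suc (Suc (i - 1))"
    using gdist_intermediate[of v x "Suc i"] assms by auto
  have "3 \<le> card (N y \<inter> layer v (Suc (i - 1)))"
    using card_nbhd_prev_layer_ge_3[OF assms(1) y] .
  then have "3 \<le> card (N y \<inter> layer v i)"
    using assms(3) by simp
  also have "\<dots> \<le> card (layer v i)"
    by (rule card_mono[OF finite_layer]) blast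
  finally show ?thesis .
qed

lemma card_nbhd_in_layer_2_le:
  assumes v: "v \<in> V" and a: "a \<in> N v"
  shows "card {x \<in> layer v 2. E x a} + 2 \<le> deg V E v"
proof -
  let ?C = "N a \<inter> N v" and ?D = "{x \<in> layer v 2. E x a}"
  have "?C \<inter> ?D = {}" using layer_1[OF v, symmetric] unfolding layer_def by auto
  then have "card ?C + card ?D = card (?C \<union> ?D)"
    using finite_nbhd finite_layer by (simp add: card_Un_disjoint)
  also have "\<dots> < deg V E a"
  proof -
    have "v \<in> N a" "v \<notin> ?C" "v \<notin> ?D"
      using a edge_irrefl edge_sym[of v a] gdist_self[OF v] in_nbhd_iff unfolding layer_def by auto
    moreover have "?C \<union> ?D \<subseteq> N a" using edge_sym in_nbhd_iff by blast
    ultimately have "?C \<union> ?D \<subset> N a" by blast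
    then show ?thesis unfolding deg_def by (rule psubset_card_mono[OF finite_nbhd])
  qed
  moreover have "deg V E a \<le> 2 * card ?C"
    using a edge_sym deg_le_twice_common_nbhd in_nbhd_iff by blast
  moreover have "card ?C < deg V E v" using card_nbhd_Int_less[OF a] .
  ultimately show ?thesis by linarith
qed

lemma degree_ge_5:
  assumes n: "9 \<le> card V" and v: "v \<in> V"
  shows "5 \<le> deg V E v"
proof (rule ccontr)
  assume "\<not> 5 \<le> deg V E v"
  then have deg_v: "deg V E v \<le> 4" by simp
  have "3 * card (layer v 2) \<le> 2 * card (N v)"
  proof (rule double_counting_le[OF finite_layer finite_nbhd])
    fix x assume "x \<in> layer v 2"
    then have "3 \<le> card (N x \<inter> layer v 1)"
      using card_nbhd_prev_layer_ge_3[OF v, of x 0] unfolding layer_def by (simp add: numeral_2_eq_2)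
    moreover have "N x \<inter> layer v 1 = {a \<in> N v. E x a}"
      using layer_1[OF v] in_nbhd_iff by auto
    ultimately show "3 \<le> card {a \<in> N v. E x a}" by simp
  next
    fix a assume "a \<in> N v"
    then show "card {x \<in> layer v 2. E x a} \<le> 2"
      using card_nbhd_in_layer_2_le[OF v] deg_v by fastforce
  qed
  then have layer_2: "card (layer v 2) \<le> 2" using deg_v unfolding deg_def by linarith
  have "V \<subseteq> layer v 0 \<union> layer v 1 \<union> layer v 2"
  proof
    fix x assume x: "x \<in> V"
    have "\<not> 2 < gdist V E v x" using card_layer_ge_3[OF v x, of 2] layer_2 by linarith
    then show "x \<in> layer v 0 \<union> layer v 1 \<union> layer v 2" using x unfolding layer_def by auto
  qed
  then have "card V \<le> card (layer v 0 \<union> layer v 1 \<union> layer v 2)"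
    using finite_layer by (intro card_mono) auto
  also have "\<dots> \<le> card (layer v 0) + card (layer v 1) + card (layer v 2)"
    using card_Un_le[of "layer v 0 \<union> layer v 1" "layer v 2"] card_Un_le[of "layer v 0" "layer v 1"]
    by linarith
  finally have "card V \<le> card (layer v 0) + card (layer v 1) + card (layer v 2)" .
  then show False
    using n deg_v layer_2 layer_0[OF v] layer_1[OF v] unfolding deg_def by simp
qed

lemma diam_le_card_div_3:
  assumes n: "9 \<le> card V"
  shows "diam V E \<le> card V div 3 - 1"
proof (cases "diam V E \<le> 2")
  case True
  moreover have "3 \<le> card V div 3" using n by simp
  ultimately show ?thesis by simp
next
  case False
  let ?D = "diam V E"
  obtain v w where v: "v \<in> V" and w: "w \<in> V" "gdist V E v w = ?D"
    using diam_attained by blast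
  have "3 * (?D + 1) \<le> (\<Sum>i\<le>?D. card (layer v i))"
  proof (rule sum_ge_three_per_index)
    show "6 \<le> card (layer v 0) + card (layer v 1)"
      using degree_ge_5[OF n v] layer_0[OF v] layer_1[OF v] unfolding deg_def by simp
    have "w \<notin> N w" using edge_irrefl in_nbhd_iff by blast
    then have "6 \<le> card (insert w (N w))"
      using degree_ge_5[OF n w(1)] finite_nbhd unfolding deg_def by simp
    also have "\<dots> \<le> card (layer v (?D - 1) \<union> layer v ?D)"
      using closed_nbhd_of_farthest_subset[OF v w] finite_layer by (intro card_mono) auto
    also have "\<dots> = card (layer v (?D - 1)) + card (layer v ?D)"
      using False finite_layer by (intro card_Un_disjoint) (auto simp: layer_def)
    finally show "6 \<le> card (layer v (?D - 1)) + card (layer v ?D)" .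
  next
    fix i assume "2 \<le> i" "i \<le> ?D - 2"
    then show "3 \<le> card (layer v i)" using card_layer_ge_3[OF v w(1)] w(2) by simp
  qed (use False in simp)
  also have "\<dots> = card (\<Union>i\<le>?D. layer v i)"
    using finite_layer by (intro card_UN_disjoint[symmetric]) (auto simp: layer_def)
  also have "\<dots> \<le> card V"
    using finite_V by (intro card_mono) (auto simp: layer_def)
  finally have "?D + 1 \<le> card V div 3" by simp
  then show ?thesis by simp
qed

end

section \<open>The strong product of a path and a triangle\<close>

abbreviation PK3_V :: "nat \<Rightarrow> (nat \<times> nat) set" where
  "PK3_V m \<equiv> strong_V (path_V m) K3_V"

abbreviation PK3_E :: "nat \<Rightarrow> nat \<times> nat \<Rightarrow> nat \<times> nat \<Rightarrow> bool" where
  "PK3_E m \<equiv> strong_E (path_V m) (path_E m) K3_V K3_E"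

lemma PK3_V_eq: "PK3_V m = {0..<m} \<times> {0, 1, 2}"
  by (simp add: strong_V_def path_V_def K3_V_def)

lemma PK3_E_iff:
  "PK3_E m p q \<longleftrightarrow>
     p \<in> PK3_V m \<and> q \<in> PK3_V m \<and> p \<noteq> q \<and> fst p \<le> Suc (fst q) \<and> fst q \<le> Suc (fst p)"
  unfolding PK3_V_eq
  by (cases p; cases q) (auto simp: strong_E_def path_V_def K3_V_def path_E_def K3_E_def)

lemma card_PK3_V: "card (PK3_V m) = 3 * m"
  unfolding PK3_V_eq by (simp add: card_cartesian_product)

lemma simple_graph_PK3: "simple_graph (PK3_V m) (PK3_E m)"
  unfolding simple_graph_def using PK3_E_iff by (auto simp: PK3_V_eq)

interpretation PK3: sgraph "PK3_V m" "PK3_E m" for m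
  by unfold_locales (rule simple_graph_PK3)

lemma reach_PK3:
  assumes m: "2 \<le> m" and p: "p \<in> PK3_V m" and q: "q \<in> PK3_V m"
  shows "\<exists>k \<le> m - 1. reach (PK3_V m) (PK3_E m) k p q"
proof -
  obtain i a j b where pq: "p = (i, a)" "q = (j, b)" by fastforce
  have ij: "i < m" "j < m" "a \<in> {0, 1, 2}" "b \<in> {0, 1, 2}"
    using p q pq by (auto simp: PK3_V_eq)
  \<comment> \<open>Walk along the path coordinate, switching the triangle coordinate on the first step.\<close>
  define c where "c t = (if t = 0 then a else b)" for t :: nat
  have c: "c t \<in> {0, 1, 2}" for t using ij c_def by simp
  consider "i < j" | "j < i" | "i = j" "a = b" | "i = j" "a \<noteq> b" by linarith
  then show ?thesis
  proof cases
    case 1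
    have "reach (PK3_V m) (PK3_E m) (j - i) (i + 0, c 0) (i + (j - i), c (j - i))"
      using ij c by (intro reach_chain[of _ "\<lambda>t. (i + t, c t)"]) (auto simp: PK3_E_iff PK3_V_eq)
    then show ?thesis using 1 pq ij by (intro exI[of _ "j - i"]) (auto simp: c_def)
  next
    case 2
    have "reach (PK3_V m) (PK3_E m) (i - j) (i - 0, c 0) (i - (i - j), c (i - j))"
      using ij c by (intro reach_chain[of _ "\<lambda>t. (i - t, c t)"]) (auto simp: PK3_E_iff PK3_V_eq)
    then show ?thesis using 2 pq ij by (intro exI[of _ "i - j"]) (auto simp: c_def)
  next
    case 3
    then show ?thesis using p pq by (intro exI[of _ 0]) (simp add: reach_0_iff)
  next
    case 4
    have "reach (PK3_V m) (PK3_E m) 1 (i, c 0) (i, c 1)"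
      using ij c 4 by (intro reach_chain[of _ "\<lambda>t. (i, c t)"]) (auto simp: PK3_E_iff PK3_V_eq c_def)
    then show ?thesis using 4 pq m by (intro exI[of _ 1]) (auto simp: c_def)
  qed
qed

lemma reach_PK3_end_to_end:
  assumes "reach (PK3_V m) (PK3_E m) k (0, 0) (m - 1, 0)"
  shows "m - 1 \<le> k"
  using reach_bounded_growth[of "PK3_E m" fst, OF _ assms] by (auto simp: PK3_E_iff)

lemma connected_PK3:
  assumes "2 \<le> m"
  shows "connected_graph (PK3_V m) (PK3_E m)"
  unfolding connected_graph_def
proof (intro conjI ballI)
  show "PK3_V m \<noteq> {}" using assms by (auto simp: PK3_V_eq)
next
  fix p q assume "p \<in> PK3_V m" "q \<in> PK3_V m"
  then show "\<exists>xs. walk (PK3_V m) (PK3_E m) xs \<and> hd xs = p \<and> last xs = q"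
    using reach_PK3[OF assms] unfolding reach_def by blast
qed

lemma diam_PK3:
  assumes "2 \<le> m"
  shows "diam (PK3_V m) (PK3_E m) = m - 1"
  unfolding diam_eq_Max_image
proof (rule Max_eqI)
  show "finite ((\<lambda>(u, w). gdist (PK3_V m) (PK3_E m) u w) ` (PK3_V m \<times> PK3_V m))"
    by (simp add: PK3_V_eq)
next
  fix d assume "d \<in> (\<lambda>(u, w). gdist (PK3_V m) (PK3_E m) u w) ` (PK3_V m \<times> PK3_V m)"
  then obtain u w where "u \<in> PK3_V m" "w \<in> PK3_V m" "d = gdist (PK3_V m) (PK3_E m) u w"
    by auto
  moreover from this obtain k where "k \<le> m - 1" "reach (PK3_V m) (PK3_E m) k u w"
    using reach_PK3[OF assms] by blast
  ultimately show "d \<le> m - 1" using gdist_le by (metis order.trans)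
next
  have ends: "(0, 0) \<in> PK3_V m" "(m - 1, 0) \<in> PK3_V m" using assms by (auto simp: PK3_V_eq)
  then obtain k where k: "reach (PK3_V m) (PK3_E m) k (0, 0) (m - 1, 0)" "k \<le> m - 1"
    using reach_PK3[OF assms] by blast
  have "gdist (PK3_V m) (PK3_E m) (0, 0) (m - 1, 0) \<le> k" using gdist_le[OF k(1)] .
  moreover have "m - 1 \<le> gdist (PK3_V m) (PK3_E m) (0, 0) (m - 1, 0)"
    using reach_PK3_end_to_end[OF reach_gdist[OF k(1)]] .
  ultimately have "gdist (PK3_V m) (PK3_E m) (0, 0) (m - 1, 0) = m - 1" using k(2) by linarith
  then show "m - 1 \<in> (\<lambda>(u, w). gdist (PK3_V m) (PK3_E m) u w) ` (PK3_V m \<times> PK3_V m)"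
    using ends by force
qed

lemma deg_PK3_le_8:
  assumes "v \<in> PK3_V m"
  shows "deg (PK3_V m) (PK3_E m) v \<le> 8"
proof -
  obtain i a where v: "v = (i, a)" by fastforce
  let ?S = "{i - 1, i, Suc i} \<times> {0, 1, 2 :: nat}"
  have "nbhd (PK3_V m) (PK3_E m) v \<subseteq> ?S - {v}"
  proof
    fix x assume "x \<in> nbhd (PK3_V m) (PK3_E m) v"
    then have x: "PK3_E m v x" using PK3.in_nbhd_iff by blast
    obtain c d where cd: "x = (c, d)" by fastforce
    have "c = i - 1 \<or> c = i \<or> c = Suc i" using x v cd unfolding PK3_E_iff by auto
    then show "x \<in> ?S - {v}" using x cd unfolding PK3_E_iff PK3_V_eq by auto
  qed
  moreover have "card ?S \<le> 9"
    using card_insert_le[of "{i, Suc i}" "i - 1"] by (simp add: card_cartesian_product card_insert_if)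
  moreover have "v \<in> ?S" using assms v by (auto simp: PK3_V_eq)
  ultimately show ?thesis
    unfolding deg_def using card_mono[of "?S - {v}" "nbhd (PK3_V m) (PK3_E m) v"] by simp
qed

lemma card_common_nbhd_PK3_ge_4:
  assumes m: "2 \<le> m" and vu: "PK3_E m v u"
  shows "4 \<le> card (nbhd (PK3_V m) (PK3_E m) v \<inter> nbhd (PK3_V m) (PK3_E m) u)"
proof -
  obtain i a j b where v: "v = (i, a)" and u: "u = (j, b)" by fastforce
  have ij: "i < m" "j < m" "j \<le> Suc i" "i \<le> Suc j" "a \<in> {0, 1, 2}" "b \<in> {0, 1, 2}" "u \<noteq> v"
    using vu v u unfolding PK3_E_iff PK3_V_eq by auto
  obtain i' where i': "i' < m" "i' \<noteq> i" "i' \<le> Suc i" "i \<le> Suc i'" "j \<in> {i, i'}"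
  proof (cases "j = i")
    case True
    then show ?thesis
      using that[of "if Suc i < m then Suc i else i - 1"] ij m by (cases "Suc i < m") auto
  next
    case False
    then show ?thesis using that[of j] ij by auto
  qed
  let ?S = "{i, i'} \<times> {0, 1, 2 :: nat}"
  let ?C = "?S - {v, u}"
  have "?C \<subseteq> nbhd (PK3_V m) (PK3_E m) v \<inter> nbhd (PK3_V m) (PK3_E m) u"
  proof
    fix x assume x: "x \<in> ?C"
    obtain c d where cd: "x = (c, d)" by fastforce
    have "c \<in> {i, i'}" "d \<in> {0, 1, 2}" "x \<noteq> v" "x \<noteq> u" using x cd by auto
    then have "x \<in> PK3_V m" "c \<le> Suc i" "i \<le> Suc c" "c \<le> Suc j" "j \<le> Suc c" "x \<noteq> v" "x \<noteq> u"
      using ij(1) i' cd by (auto simp: PK3_V_eq)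
    then have "PK3_E m v x" "PK3_E m u x"
      using vu v u cd unfolding PK3_E_iff by auto
    then show "x \<in> nbhd (PK3_V m) (PK3_E m) v \<inter> nbhd (PK3_V m) (PK3_E m) u"
      using PK3.in_nbhd_iff by blast
  qed
  moreover have "card ?C = 4"
  proof -
    have "card ?S = 6" using i'(2) by (simp add: card_cartesian_product)
    moreover have "{v, u} \<subseteq> ?S" using ij i'(5) v u by auto
    moreover have "card {v, u} = 2" using ij(7) by simp
    ultimately show ?thesis by (simp add: card_Diff_subset)
  qed
  ultimately show ?thesis
    using card_mono[OF finite_Int[OF disjI1[OF PK3.finite_nbhd]]] by metis
qed

lemma locally_dirac_PK3:
  assumes "2 \<le> m"
  shows "locally_dirac (PK3_V m) (PK3_E m)"
  unfolding locally_dirac_def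
proof (intro ballI)
  fix v u assume v: "v \<in> PK3_V m" and u: "u \<in> nbhd (PK3_V m) (PK3_E m) v"
  have "deg (PK3_V m) (PK3_E m) v \<le> 2 * card (nbhd (PK3_V m) (PK3_E m) v \<inter> nbhd (PK3_V m) (PK3_E m) u)"
    using deg_PK3_le_8[OF v] card_common_nbhd_PK3_ge_4[OF assms] u PK3.in_nbhd_iff by fastforce
  then show "real (deg (PK3_V m) (PK3_E m) v) / 2
      \<le> real (deg (nbhd (PK3_V m) (PK3_E m) v) (induced_rel (nbhd (PK3_V m) (PK3_E m) v) (PK3_E m)) u)"
    by (simp add: deg_induced_nbhd[OF u])
qed

theorem mainTheorem9:
  fixes V :: "'a set" and E :: "'a \<Rightarrow> 'a \<Rightarrow> bool"
  shows "(simple_graph V E \<and> connected_graph V E \<and> locally_dirac V E \<and> card V \<ge> 9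
            \<longrightarrow> diam V E \<le> card V div 3 - 1)
       \<and> (\<forall>m::nat. m \<ge> 3 \<longrightarrow>
            (let W = strong_V (path_V m) K3_V;
                 F = strong_E (path_V m) (path_E m) K3_V K3_E
             in simple_graph W F \<and> connected_graph W F \<and> locally_dirac W F
                \<and> card W = 3 * m \<and> diam W F = card W div 3 - 1 \<and> diam W F = m - 1))"
proof (intro conjI allI impI)
  assume G: "simple_graph V E \<and> connected_graph V E \<and> locally_dirac V E \<and> card V \<ge> 9"
  then interpret connected_ldirac_sgraph V E
    by unfold_locales blast+
  show "diam V E \<le> card V div 3 - 1"
    using diam_le_card_div_3 G by blast
next
  fix m :: nat
  assume "m \<ge> 3"
  then have "2 \<le> m" by simp
  then show "let W = PK3_V m; F = PK3_E m
             in simple_graph W F \<and> connected_graph W F \<and> locally_dirac W F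
                \<and> card W = 3 * m \<and> diam W F = card W div 3 - 1 \<and> diam W F = m - 1"
    using simple_graph_PK3 connected_PK3 locally_dirac_PK3 card_PK3_V diam_PK3
    by (simp add: Let_def)
qed

end
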